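(* Let $p$ be a positive integer with $\tau(p) > m'$, where $m'$ is the largest number of linearly independent constraint matrices that can be simultaneously active, i.e. $m' = \max_{X\in\mathscr{X}} \dim \operatorname{span}\{A_i : A_i\bullet X = b_i\}$. Fix $A_1,\dots,A_m$ and $b$. Then for a generic $C\in\mathbb{S}^n$ (that is, for all $C$ outside a Lebesgue measure zero subset of $\mathbb{S}^n$), problem (BM) has no spurious 2-critical points: every 2-critical point $Y$ of (BM) is a global minimizer of (BM), and hence $YY^T$ is an optimal solution of (SDP).
   Context: Let $\mathbb{S}^n$ be the space of real symmetric $n\times n$ matrices, with inner product $A\bullet B=\operatorname{trace}(A^TB)$ (also used for $A\in\mathbb{S}^n$, $B\in\mathbb{R}^{n\times n}$), and $\mathbb{S}^n_+$ the cone of positive semidefinite matrices. Let $m=m_1+m_2$, let $C,A_1,\dots,A_m\in\mathbb{S}^n$, $b\in\mathbb{R}^m$, $\mathcal{A}(X)=(A_1\bullet X,\dots,A_m\bullet X)$ and $\mathcal{A}^*(\lambda)=\sum_i\lambda_iA_i$. Let $\mathscr{X}=\{X\in\mathbb{S}^n_+ : A_i\bullet X=b_i \ (i\le m_1),\ A_i\bullet X\ge b_i\ (m_1<i\le m)\}$; assume $\mathscr{X}$ is nonempty and that (SDP): $\min_{X\in\mathscr{X}} C\bullet X$ attains its minimum. Problem (BM) is $\min_{Y\in\mathbb{R}^{n\times p}} C\bullet YY^T$ subject to $YY^T\in\mathscr{X}$. For $Y$, let $I(Y)=\{i\in[m]: A_i\bullet YY^T=b_i\}$ and $S(\lambda)=C-\mathcal{A}^*(\lambda)$.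 A point $Y$ is 1-critical for (BM) if $YY^T\in\mathscr{X}$ and there is $\lambda\in\mathbb{R}^{m_1}\times\mathbb{R}^{m_2}_+$ with $\lambda_i=0$ for $i\notin I(Y)$ and $S(\lambda)Y=0$; it is 2-critical if moreover (for such a $\lambda$) $S(\lambda)\bullet UU^T\ge 0$ for all $U\in\mathbb{R}^{n\times p}$ with $A_i\bullet UY^T=0$ for all $i\in I(Y)$. A critical point is spurious if it is not a global minimizer of (BM). $\tau(k)=\binom{k+1}{2}$. *)

theory Defs
  imports "HOL-Analysis.Analysis"
begin

(* Matrices in S^n are represented as real^'n^'n; n x p matrices as real^'p^'n.
   Constraint indices are 0-based: i < m1 equality, m1 <= i < m1+m2 inequality. *)

definition mdot :: "real^'n^'n \<Rightarrow> real^'n^'n \<Rightarrow> real" where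
  "mdot A B = trace (transpose A ** B)"

definition sym_mat :: "real^'n^'n \<Rightarrow> bool" where
  "sym_mat M \<longleftrightarrow> transpose M = M"

definition psd :: "real^'n^'n \<Rightarrow> bool" where
  "psd X \<longleftrightarrow> sym_mat X \<and> (\<forall>x. 0 \<le> x \<bullet> (X *v x))"

definition tau :: "nat \<Rightarrow> nat" where
  "tau k = (k + 1) choose 2"

definition sym_part :: "real^'n^'n \<Rightarrow> real^'n^'n" where
  "sym_part M = (1/2) *\<^sub>R (M + transpose M)"

definition gram :: "real^'p^'n \<Rightarrow> real^'n^'n" where
  "gram Y = Y ** transpose Y"

definition feasible :: "(nat \<Rightarrow> real^'n^'n) \<Rightarrow> (nat \<Rightarrow> real) \<Rightarrow> nat \<Rightarrow> nat \<Rightarrow> real^'n^'n \<Rightarrow> bool" where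
  "feasible A b m1 m2 X \<longleftrightarrow> psd X \<and> (\<forall>i<m1. mdot (A i) X = b i)
     \<and> (\<forall>i. m1 \<le> i \<and> i < m1 + m2 \<longrightarrow> mdot (A i) X \<ge> b i)"

definition active :: "(nat \<Rightarrow> real^'n^'n) \<Rightarrow> (nat \<Rightarrow> real) \<Rightarrow> nat \<Rightarrow> nat \<Rightarrow> real^'n^'n \<Rightarrow> nat set" where
  "active A b m1 m2 X = {i. i < m1 + m2 \<and> mdot (A i) X = b i}"

definition mprime :: "(nat \<Rightarrow> real^'n^'n) \<Rightarrow> (nat \<Rightarrow> real) \<Rightarrow> nat \<Rightarrow> nat \<Rightarrow> nat" where
  "mprime A b m1 m2 = Max {dim (A ` active A b m1 m2 X) | X. feasible A b m1 m2 X}"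

definition Smat :: "real^'n^'n \<Rightarrow> (nat \<Rightarrow> real^'n^'n) \<Rightarrow> nat \<Rightarrow> (nat \<Rightarrow> real) \<Rightarrow> real^'n^'n" where
  "Smat C A m lam = C - (\<Sum>i<m. lam i *\<^sub>R A i)"

definition sdp_opt :: "real^'n^'n \<Rightarrow> (nat \<Rightarrow> real^'n^'n) \<Rightarrow> (nat \<Rightarrow> real) \<Rightarrow> nat \<Rightarrow> nat \<Rightarrow> real^'n^'n \<Rightarrow> bool" where
  "sdp_opt C A b m1 m2 X \<longleftrightarrow> feasible A b m1 m2 X \<and>
     (\<forall>X'. feasible A b m1 m2 X' \<longrightarrow> mdot C X \<le> mdot C X')"

definition sdp_attains :: "real^'n^'n \<Rightarrow> (nat \<Rightarrow> real^'n^'n) \<Rightarrow> (nat \<Rightarrow> real) \<Rightarrow> nat \<Rightarrow> nat \<Rightarrow> bool" where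
  "sdp_attains C A b m1 m2 \<longleftrightarrow> (\<exists>X. sdp_opt C A b m1 m2 X)"

definition bm_global_min :: "real^'n^'n \<Rightarrow> (nat \<Rightarrow> real^'n^'n) \<Rightarrow> (nat \<Rightarrow> real) \<Rightarrow> nat \<Rightarrow> nat \<Rightarrow> real^'p^'n \<Rightarrow> bool" where
  "bm_global_min C A b m1 m2 Y \<longleftrightarrow> feasible A b m1 m2 (gram Y) \<and>
     (\<forall>Z::real^'p^'n. feasible A b m1 m2 (gram Z) \<longrightarrow> mdot C (gram Y) \<le> mdot C (gram Z))"

definition crit1_mult :: "real^'n^'n \<Rightarrow> (nat \<Rightarrow> real^'n^'n) \<Rightarrow> (nat \<Rightarrow> real) \<Rightarrow> nat \<Rightarrow> nat \<Rightarrow> real^'p^'n \<Rightarrow> (nat \<Rightarrow> real) \<Rightarrow> bool" where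
  "crit1_mult C A b m1 m2 Y lam \<longleftrightarrow>
     (\<forall>i. m1 \<le> i \<and> i < m1 + m2 \<longrightarrow> 0 \<le> lam i) \<and>
     (\<forall>i<m1 + m2. i \<notin> active A b m1 m2 (gram Y) \<longrightarrow> lam i = 0) \<and>
     Smat C A (m1 + m2) lam ** Y = 0"

definition one_critical :: "real^'n^'n \<Rightarrow> (nat \<Rightarrow> real^'n^'n) \<Rightarrow> (nat \<Rightarrow> real) \<Rightarrow> nat \<Rightarrow> nat \<Rightarrow> real^'p^'n \<Rightarrow> bool" where
  "one_critical C A b m1 m2 Y \<longleftrightarrow> feasible A b m1 m2 (gram Y) \<and>
     (\<exists>lam. crit1_mult C A b m1 m2 Y lam)"

definition two_critical :: "real^'n^'n \<Rightarrow> (nat \<Rightarrow> real^'n^'n) \<Rightarrow> (nat \<Rightarrow> real) \<Rightarrow> nat \<Rightarrow> nat \<Rightarrow> real^'p^'n \<Rightarrow> bool" where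
  "two_critical C A b m1 m2 Y \<longleftrightarrow> feasible A b m1 m2 (gram Y) \<and>
     (\<exists>lam. crit1_mult C A b m1 m2 Y lam \<and>
        (\<forall>U::real^'p^'n. (\<forall>i\<in>active A b m1 m2 (gram Y). mdot (A i) (U ** transpose Y) = 0)
            \<longrightarrow> 0 \<le> mdot (Smat C A (m1 + m2) lam) (gram U)))"

end

theory Submission
  imports Defs
begin

(* A 2-critical point Y whose columns are linearly dependent is globally optimal: testing the
   second-order condition with U = u e^T, where Y e = 0, shows that the multiplier matrix
   S = C - A^*(lam) is positive semidefinite, and together with S Y = 0 and complementary
   slackness this is a dual certificate for the SDP.  So it suffices that for generic C no
   1-critical point has full column rank p.  For such a point S has a p-dimensional kernel, so
   after choosing n - p coordinates J complementary to the range of Y, S = (I - G)^T T (I - G)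
   with G supported on J x J^c and T symmetric supported on J x J, while A^*(lam) lies in the
   span of the active constraints, of dimension at most m'.  Hence every such cost, up to a skew
   part, lies in the image of a smooth map on a space of dimension at most
   (n - p) p + tau(n - p) + m' + binom(n, 2), which is less than n^2 because tau(p) > m'.
   Finitely many such images cover the bad costs, and each is Lebesgue-null. *)

lemma mdot_eq_inner: "mdot A B = A \<bullet> B"
proof -
  have "mdot A B = (\<Sum>i\<in>UNIV. \<Sum>k\<in>UNIV. A$k$i * B$k$i)"
    unfolding mdot_def trace_def matrix_matrix_mult_def transpose_def by simp
  also have "\<dots> = A \<bullet> B"
    by (subst sum.swap) (simp add: inner_vec_def inner_real_def)
  finally show ?thesis .
qed

lemma transpose_zero [simp]: "transpose 0 = (0 :: 'a::zero^'n^'m)"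
  by (simp add: transpose_def vec_eq_iff)

lemma transpose_add: "transpose (A + B) = transpose A + transpose (B :: 'a::ring_1^'n^'m)"
  by (simp add: transpose_def vec_eq_iff)

lemma transpose_diff: "transpose (A - B) = transpose A - transpose (B :: 'a::ring_1^'n^'m)"
  by (simp add: transpose_def vec_eq_iff)

lemma linear_transpose: "linear (transpose :: real^'n^'m \<Rightarrow> real^'m^'n)"
  by (rule linearI) (simp_all add: transpose_add transpose_scalar)

lemma matrix_eq_iff_basis: "A = B \<longleftrightarrow> (\<forall>k. A *v axis k 1 = B *v axis k (1::real))"
  by (simp add: matrix_vector_mult_basis column_def vec_eq_iff) blast

lemma bounded_bilinear_matrix_mult:
  "bounded_bilinear ((**) :: real^'n^'m \<Rightarrow> real^'p^'n \<Rightarrow> real^'p^'m)"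
proof -
  have "bilinear ((**) :: real^'n^'m \<Rightarrow> real^'p^'n \<Rightarrow> real^'p^'m)"
    unfolding bilinear_def
    by (auto intro!: linearI simp: matrix_add_ldistrib matrix_scalar_ac scalar_matrix_assoc
        matrix_matrix_mult_def vec_eq_iff sum.distrib sum_distrib_left algebra_simps)
  then show ?thesis
    by (simp add: bilinear_conv_bounded_bilinear)
qed

lemma differentiable_matrix_mult:
  fixes f :: "'a::real_normed_vector \<Rightarrow> real^'n^'m" and g :: "'a \<Rightarrow> real^'p^'n"
  assumes "f differentiable (at x within S)" and "g differentiable (at x within S)"
  shows "(\<lambda>x. f x ** g x) differentiable (at x within S)"
  using assms bounded_bilinear.FDERIV[OF bounded_bilinear_matrix_mult]
  unfolding differentiable_def by blast

definition outer_prod :: "real^'n \<Rightarrow> real^'n^'n" where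
  "outer_prod v = (\<chi> i j. v$i * v$j)"

lemma inner_outer_prod: "x \<bullet> (outer_prod v *v x) = (v \<bullet> x)\<^sup>2"
  by (simp add: outer_prod_def inner_vec_def matrix_vector_mult_def power2_eq_square
      sum_product sum_distrib_left algebra_simps)

lemma mdot_outer_prod: "mdot S (outer_prod v) = v \<bullet> (S *v v)"
  by (simp add: mdot_eq_inner outer_prod_def inner_vec_def matrix_vector_mult_def
      sum_distrib_left algebra_simps)

lemma inner_axis_matrix_axis: "axis i (1::real) \<bullet> (X *v axis j 1) = X$i$j"
  by (simp add: inner_axis' matrix_vector_mult_basis column_def)

lemma psd_entry_sym: "psd X \<Longrightarrow> X$j$i = X$i$j"
  unfolding psd_def sym_mat_def by (metis transpose_def vec_lambda_beta)

lemma psd_diag_nonneg: "psd X \<Longrightarrow> 0 \<le> X$i$i"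
  unfolding psd_def by (metis inner_axis_matrix_axis)

lemma psd_entry_eq_0_if_diag_eq_0:
  assumes "psd X" "X$j$j = 0"
  shows "X$i$j = 0"
proof (rule ccontr)
  assume ne: "X$i$j \<noteq> 0"
  define t where "t = - (X$i$i + 1) / (2 * X$i$j)"
  let ?x = "t *\<^sub>R axis j 1 + axis i (1::real)"
  have "0 \<le> ?x \<bullet> (X *v ?x)"
    using assms(1) unfolding psd_def by blast
  also have "?x \<bullet> (X *v ?x) = t * t * X$j$j + t * X$j$i + t * X$i$j + X$i$i"
    by (simp add: matrix_vector_right_distrib matrix_vector_mult_scaleR inner_add_left
        inner_add_right inner_axis_matrix_axis algebra_simps)
  also have "\<dots> = -1"
    using ne assms(2) psd_entry_sym[OF assms(1), of i j] by (simp add: t_def field_simps)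
  finally show False by simp
qed

lemma psd_minus_outer_column:
  assumes X: "psd X" and d: "X$i$i \<noteq> 0"
  defines "X' \<equiv> X - (1 / X$i$i) *\<^sub>R outer_prod (column i X)"
  shows "psd X'" and "{j. X'$j$j \<noteq> 0} \<subseteq> {j. X$j$j \<noteq> 0} - {i}"
proof -
  let ?c = "column i X" and ?d = "X$i$i"
  have dpos: "0 < ?d" using psd_diag_nonneg[OF X, of i] d by simp
  have cx: "axis i 1 \<bullet> (X *v x) = ?c \<bullet> x" for x
  proof -
    have "axis i 1 \<bullet> (X *v x) = (X *v x)$i" by (simp add: inner_axis')
    then show ?thesis
      by (simp add: matrix_vector_mult_def column_def inner_vec_def psd_entry_sym[OF X])
  qed
  have xc: "x \<bullet> (X *v axis i 1) = ?c \<bullet> x" for x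
    by (simp add: matrix_vector_mult_basis inner_commute)
  have ci: "?c \<bullet> axis i 1 = ?d"
    using xc[of "axis i 1"] inner_axis_matrix_axis[of i X i] by simp
  show "psd X'"
    unfolding psd_def
  proof
    show "sym_mat X'"
      using psd_entry_sym[OF X]
      by (simp add: X'_def sym_mat_def transpose_def vec_eq_iff outer_prod_def column_def mult.commute)
    show "\<forall>x. 0 \<le> x \<bullet> (X' *v x)"
    proof
      fix x
      \<comment> \<open>complete the square along the \<open>i\<close>-th coordinate\<close>
      let ?y = "x - ((?c \<bullet> x) / ?d) *\<^sub>R axis i 1"
      have "0 \<le> ?y \<bullet> (X *v ?y)" using X unfolding psd_def by blast
      also have "?y \<bullet> (X *v ?y) = x \<bullet> (X *v x) - (1 / ?d) * (?c \<bullet> x)\<^sup>2"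
        using dpos
        by (simp add: matrix_vector_mult_diff_distrib matrix_vector_mult_scaleR inner_diff_left
            inner_diff_right cx xc ci field_simps power2_eq_square)
      also have "\<dots> = x \<bullet> (X' *v x)"
        by (simp add: X'_def matrix_vector_mult_diff_rdistrib inner_diff_right inner_outer_prod
            flip: scaleR_matrix_vector_assoc)
      finally show "0 \<le> x \<bullet> (X' *v x)" .
    qed
  qed
  show "{j. X'$j$j \<noteq> 0} \<subseteq> {j. X$j$j \<noteq> 0} - {i}"
  proof
    fix j assume j: "j \<in> {j. X'$j$j \<noteq> 0}"
    have e: "X'$j$j = X$j$j - (1 / ?d) * (X$j$i * X$j$i)"
      by (simp add: X'_def outer_prod_def column_def)
    have "j \<noteq> i" using j e d by (auto simp: field_simps)
    moreover have "X$j$j \<noteq> 0"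
      using j e psd_entry_eq_0_if_diag_eq_0[OF X] psd_entry_sym[OF X] by force
    ultimately show "j \<in> {j. X$j$j \<noteq> 0} - {i}" by simp
  qed
qed

lemma psd_eq_sum_outer_prod:
  "psd X \<Longrightarrow> \<exists>vs. X = sum_list (map outer_prod vs)"
proof (induction "card {j. X$j$j \<noteq> 0}" arbitrary: X rule: less_induct)
  case less
  show ?case
  proof (cases "\<exists>i. X$i$i \<noteq> 0")
    case False
    then have "X = 0"
      using psd_entry_eq_0_if_diag_eq_0[OF less.prems] by (simp add: vec_eq_iff)
    then show ?thesis by (intro exI[of _ "[]"]) simp
  next
    case True
    then obtain i where d: "X$i$i \<noteq> 0" by blast
    let ?c = "column i X"
    let ?X = "X - (1 / X$i$i) *\<^sub>R outer_prod ?c"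
    note step = psd_minus_outer_column[OF less.prems d]
    have "card {j. ?X$j$j \<noteq> 0} \<le> card ({j. X$j$j \<noteq> 0} - {i})"
      by (rule card_mono[OF _ step(2)]) simp
    also have "\<dots> < card {j. X$j$j \<noteq> 0}"
      using d by (intro card_Diff1_less) auto
    finally obtain vs where vs: "?X = sum_list (map outer_prod vs)"
      using less.hyps step(1) by blast
    have "0 < X$i$i" using psd_diag_nonneg[OF less.prems, of i] d by simp
    then have "outer_prod (sqrt (1 / X$i$i) *\<^sub>R ?c) = (1 / X$i$i) *\<^sub>R outer_prod ?c"
      by (simp add: outer_prod_def vec_eq_iff algebra_simps)
    with vs have "X = sum_list (map outer_prod (sqrt (1 / X$i$i) *\<^sub>R ?c # vs))"
      by (simp add: algebra_simps)
    then show ?thesis by blast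
  qed
qed

lemma mdot_nonneg_if_psd:
  assumes "psd X" and "\<And>u. 0 \<le> u \<bullet> (S *v u)"
  shows "0 \<le> mdot S X"
proof -
  obtain vs where "X = sum_list (map outer_prod vs)"
    using psd_eq_sum_outer_prod[OF assms(1)] by blast
  moreover have "0 \<le> mdot S (sum_list (map outer_prod vs))" for vs
    using assms(2) by (induction vs) (simp_all add: mdot_eq_inner inner_add_right
        flip: mdot_outer_prod)
  ultimately show ?thesis by simp
qed

section \<open>Rank-deficient second-order critical points are optimal\<close>

lemma sym_mat_Smat:
  assumes "\<forall>i<m. sym_mat (A i)" and "sym_mat C"
  shows "sym_mat (Smat C A m lam)"
  using assms unfolding Smat_def sym_mat_def
  by (simp add: vec_eq_iff transpose_def sum_component)

lemma mdot_Smat: "mdot (Smat C A m lam) X = mdot C X - (\<Sum>i<m. lam i * mdot (A i) X)"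
  by (simp add: Smat_def mdot_eq_inner inner_diff_left inner_sum_left)

lemma mdot_gram_eq_0:
  assumes "sym_mat S" and "S ** Y = 0"
  shows "mdot S (gram Y) = 0"
  using assms unfolding mdot_def gram_def sym_mat_def
  by (simp add: matrix_mul_assoc trace_0 flip: mat_0)

lemma quadratic_form_nonneg_if_rank_deficient:
  fixes Y :: "real^'p^'n"
  assumes second_order: "\<forall>U::real^'p^'n. (\<forall>i\<in>I. mdot (A i) (U ** transpose Y) = 0)
      \<longrightarrow> 0 \<le> mdot S (gram U)"
    and "Y *v e = 0" and "e \<noteq> 0"
  shows "0 \<le> u \<bullet> (S *v u)"
proof -
  \<comment> \<open>the direction \<open>U = u e\<^sup>T\<close> is tangent to every constraint since \<open>Y e = 0\<close>\<close>
  define U :: "real^'p^'n" where "U = (\<chi> i j. u$i * e$j)"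
  have "U ** transpose Y = (\<chi> i k. u$i * (Y *v e)$k)"
    by (simp add: U_def matrix_matrix_mult_def matrix_vector_mult_def transpose_def vec_eq_iff
        sum_distrib_left algebra_simps)
  then have "U ** transpose Y = 0"
    using assms(2) by (simp add: vec_eq_iff)
  then have "0 \<le> mdot S (gram U)"
    using second_order by (simp add: mdot_eq_inner)
  also have "gram U = (e \<bullet> e) *\<^sub>R outer_prod u"
    by (simp add: gram_def U_def outer_prod_def matrix_matrix_mult_def transpose_def vec_eq_iff
        inner_vec_def sum_distrib_left algebra_simps)
  also have "mdot S ((e \<bullet> e) *\<^sub>R outer_prod u) = (e \<bullet> e) * (u \<bullet> (S *v u))"
    by (simp add: mdot_eq_inner flip: mdot_outer_prod)
  finally have "0 \<le> (e \<bullet> e) * (u \<bullet> (S *v u))" .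
  moreover have "0 < e \<bullet> e"
    using assms(3) by simp
  ultimately show ?thesis
    by (simp add: zero_le_mult_iff)
qed

lemma dual_certificate_lower_bound:
  fixes Y :: "real^'p^'n"
  assumes "\<forall>i<m1 + m2. sym_mat (A i)" and "sym_mat C"
    and cert: "crit1_mult C A b m1 m2 Y lam"
    and psd_S: "\<And>u. 0 \<le> u \<bullet> (Smat C A (m1 + m2) lam *v u)"
    and "feasible A b m1 m2 X"
  shows "mdot C (gram Y) \<le> mdot C X"
proof -
  let ?m = "m1 + m2" and ?S = "Smat C A (m1 + m2) lam"
  have "mdot ?S (gram Y) = 0"
    using cert assms(1,2) by (intro mdot_gram_eq_0 sym_mat_Smat) (auto simp: crit1_mult_def)
  moreover have "lam i * mdot (A i) (gram Y) = lam i * b i" if "i < ?m" for i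
    using cert that by (cases "i \<in> active A b m1 m2 (gram Y)") (auto simp: active_def crit1_mult_def)
  ultimately have value_Y: "mdot C (gram Y) = (\<Sum>i<?m. lam i * b i)"
    by (simp add: mdot_Smat)
  have "(\<Sum>i<?m. lam i * b i) \<le> (\<Sum>i<?m. lam i * mdot (A i) X)"
  proof (rule sum_mono)
    fix i assume "i \<in> {..<?m}"
    then show "lam i * b i \<le> lam i * mdot (A i) X"
      using cert \<open>feasible A b m1 m2 X\<close>
      by (cases "i < m1") (auto simp: crit1_mult_def feasible_def intro: mult_left_mono)
  qed
  moreover have "0 \<le> mdot ?S X"
    using \<open>feasible A b m1 m2 X\<close> psd_S by (intro mdot_nonneg_if_psd) (auto simp: feasible_def)
  ultimately show ?thesis
    unfolding value_Y mdot_Smat by linarith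
qed

lemma two_critical_rank_deficient_optimal:
  fixes Y :: "real^'p^'n"
  assumes "\<forall>i<m1 + m2. sym_mat (A i)" and "sym_mat C"
    and "two_critical C A b m1 m2 Y" and "Y *v e = 0" and "e \<noteq> 0"
  shows "bm_global_min C A b m1 m2 Y \<and> sdp_opt C A b m1 m2 (gram Y)"
proof -
  obtain lam where "feasible A b m1 m2 (gram Y)" and cert: "crit1_mult C A b m1 m2 Y lam"
    and second_order: "\<forall>U::real^'p^'n. (\<forall>i\<in>active A b m1 m2 (gram Y). mdot (A i) (U ** transpose Y) = 0)
            \<longrightarrow> 0 \<le> mdot (Smat C A (m1 + m2) lam) (gram U)"
    using assms(3) unfolding two_critical_def by blast
  have psd_S: "0 \<le> u \<bullet> (Smat C A (m1 + m2) lam *v u)" for u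
    using second_order assms(4,5) by (rule quadratic_form_nonneg_if_rank_deficient)
  have "mdot C (gram Y) \<le> mdot C X" if "feasible A b m1 m2 X" for X
    using assms(1,2) cert psd_S that by (rule dual_certificate_lower_bound)
  with \<open>feasible A b m1 m2 (gram Y)\<close> show ?thesis
    unfolding bm_global_min_def sdp_opt_def by blast
qed

section \<open>Dimensions of spaces of structured matrices\<close>

definition supported_on :: "('n \<times> 'n) set \<Rightarrow> (real^'n^'n) set" where
  "supported_on P = {M. \<forall>i j. M$i$j \<noteq> 0 \<longrightarrow> (i, j) \<in> P}"

definition sym_block :: "'n set \<Rightarrow> (real^'n^'n) set" where
  "sym_block J = {T \<in> supported_on (J \<times> J). sym_mat T}"

definition skew_mats :: "(real^'n^'n) set" where
  "skew_mats = {K. transpose K = - K}"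

lemma subspace_supported_on: "subspace (supported_on P)"
  by (auto simp: subspace_def supported_on_def) (metis add_0)

lemma subspace_sym_block: "subspace (sym_block J)"
  using subspace_supported_on[of "J \<times> J"]
  by (auto simp: subspace_def sym_block_def sym_mat_def transpose_add transpose_scalar)

lemma subspace_skew_mats: "subspace skew_mats"
  by (auto simp: subspace_def skew_mats_def transpose_add transpose_scalar)

lemma sym_mat_sym_part: "sym_mat (sym_part M)"
  by (simp add: sym_mat_def sym_part_def transpose_add transpose_scalar add.commute)

lemma diff_sym_part_in_skew_mats: "M - sym_part M \<in> skew_mats"
  by (simp add: skew_mats_def sym_part_def transpose_def vec_eq_iff field_simps)

lemma supported_on_subset_span:
  fixes P :: "('n::finite \<times> 'n) set"
  shows "supported_on P \<subseteq> span ((\<lambda>(i, j). axis i (axis j 1)) ` P)"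
proof
  fix M :: "real^'n^'n" assume M: "M \<in> supported_on P"
  have entries: "M$a$c = (\<Sum>(i, j)\<in>P. M$i$j *\<^sub>R axis i (axis j 1)) $ a $ c" for a c
  proof -
    have "(\<Sum>(i, j)\<in>P. M$i$j *\<^sub>R axis i (axis j 1)) $ a $ c
        = (\<Sum>x\<in>P. if x = (a, c) then M$a$c else 0)"
      unfolding sum_component case_prod_beta by (intro sum.cong refl) (auto simp: axis_def)
    also have "\<dots> = M$a$c"
      using M by (auto simp: supported_on_def)
    finally show ?thesis by simp
  qed
  have "M = (\<Sum>(i, j)\<in>P. M$i$j *\<^sub>R axis i (axis j 1))"
    unfolding vec_eq_iff entries[symmetric] by simp
  also have "\<dots> \<in> span ((\<lambda>(i, j). axis i (axis j 1)) ` P)"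
    by (intro span_sum) (force intro: span_mul span_base)
  finally show "M \<in> span ((\<lambda>(i, j). axis i (axis j 1)) ` P)" .
qed

lemma dim_supported_on_le: "dim (supported_on P) \<le> card P"
  by (rule order_trans[OF dim_le_card[OF supported_on_subset_span] card_image_le]) simp_all

lemma dim_le_card_if_entries_determine:
  fixes V :: "(real^'n^'n) set" and P :: "('n \<times> 'n) set"
  assumes "subspace V"
    and determined: "\<And>M. M \<in> V \<Longrightarrow> (\<And>i j. (i, j) \<in> P \<Longrightarrow> M$i$j = 0) \<Longrightarrow> M = 0"
  shows "dim V \<le> card P"
proof -
  define mask :: "real^'n^'n \<Rightarrow> real^'n^'n"
    where "mask M = (\<chi> i j. if (i, j) \<in> P then M$i$j else 0)" for M
  have lin: "linear mask"
    by (rule linearI) (simp_all add: mask_def vec_eq_iff)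
  have span_V: "span V = V"
    using \<open>subspace V\<close> by (simp add: span_eq_iff)
  have inj: "inj_on mask V"
  proof (rule inj_onI)
    fix M M' assume "M \<in> V" "M' \<in> V" and eq: "mask M = mask M'"
    have "(M - M')$i$j = 0" if "(i, j) \<in> P" for i j
      using arg_cong[OF eq, of "\<lambda>X. X$i$j"] that by (simp add: mask_def)
    moreover have "M - M' \<in> V"
      using \<open>subspace V\<close> \<open>M \<in> V\<close> \<open>M' \<in> V\<close> by (rule subspace_diff)
    ultimately show "M = M'"
      using determined by force
  qed
  have "dim V = dim (mask ` V)"
    using dim_image_eq[OF lin, of V] inj unfolding span_V by simp
  also have "\<dots> \<le> dim (supported_on P)"
    by (intro dim_subset) (auto simp: mask_def supported_on_def split: if_splits)
  also have "\<dots> \<le> card P"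
    by (rule dim_supported_on_le)
  finally show ?thesis .
qed

lemma card_strict_pairs:
  fixes f :: "'a \<Rightarrow> 'b::linorder"
  assumes "finite J" and "inj_on f J"
  shows "card {(i, j) \<in> J \<times> J. f i < f j} = card J choose 2"
proof -
  let ?L = "{(i, j) \<in> J \<times> J. f i < f j}" and ?D = "(\<lambda>i. (i, i)) ` J"
  have "(i, j) \<in> ?L \<union> prod.swap ` ?L \<union> ?D" if "i \<in> J" "j \<in> J" for i j
    using that inj_onD[OF \<open>inj_on f J\<close>, of i j]
    by (cases "f i" "f j" rule: linorder_cases) (auto simp: image_iff)
  then have "J \<times> J = ?L \<union> prod.swap ` ?L \<union> ?D"
    by (intro subset_antisym) fastforce+
  then have "card J * card J = card (?L \<union> prod.swap ` ?L \<union> ?D)"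
    by (metis card_cartesian_product)
  also have "\<dots> = card ?L + card (prod.swap ` ?L) + card ?D"
  proof -
    have "finite ?L"
      using \<open>finite J\<close> by (auto intro: finite_subset[of _ "J \<times> J"])
    moreover have "?L \<inter> prod.swap ` ?L = {}" "(?L \<union> prod.swap ` ?L) \<inter> ?D = {}"
      by auto
    ultimately show ?thesis
      using \<open>finite J\<close> by (simp add: card_Un_disjoint)
  qed
  also have "\<dots> = 2 * card ?L + card J"
    by (simp add: card_image inj_on_def)
  finally have "2 * card ?L + card J = card J * card J" by simp
  moreover have "2 * (card J choose 2) + card J = card J * card J"
    by (cases "card J") (simp_all add: choose_two algebra_simps)
  ultimately show ?thesis by simp
qed

lemma dim_sym_block_le:
  fixes J :: "'n::finite set"
  shows "dim (sym_block J) \<le> tau (card J)"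
proof -
  obtain f :: "'n \<Rightarrow> nat" where "inj f"
    using finite_imp_inj_to_nat_seg[OF finite_class.finite_UNIV] by blast
  \<comment> \<open>\<open>f\<close> orders the indices; a symmetric matrix is determined by its entries with \<open>f i \<le> f j\<close>\<close>
  let ?P = "{(i, j) \<in> J \<times> J. f i < f j} \<union> (\<lambda>i. (i, i)) ` J"
  have "dim (sym_block J) \<le> card ?P"
  proof (rule dim_le_card_if_entries_determine[OF subspace_sym_block])
    fix T assume T: "T \<in> sym_block J" and vanish: "\<And>i j. (i, j) \<in> ?P \<Longrightarrow> T$i$j = 0"
    have "T$i$j = 0" for i j
    proof (cases "i \<in> J \<and> j \<in> J")
      case True
      have "transpose T = T"
        using T by (simp add: sym_block_def sym_mat_def)
      from arg_cong[OF this, of "\<lambda>X. X$i$j"] have sym: "T$j$i = T$i$j"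
        by (simp add: transpose_def)
      consider "f i < f j" | "f j < f i" | "i = j"
        using injD[OF \<open>inj f\<close>, of i j] by (cases "f i" "f j" rule: linorder_cases) auto
      then show ?thesis
      proof cases
        case 2
        then show ?thesis using True vanish[of j i] sym by simp
      qed (use True vanish[of i j] in auto)
    next
      case False
      have "T \<in> supported_on (J \<times> J)"
        using T by (simp add: sym_block_def)
      then show ?thesis
        using False by (auto simp: supported_on_def)
    qed
    then show "T = 0" by (simp add: vec_eq_iff)
  qed
  also have "card ?P = card {(i, j) \<in> J \<times> J. f i < f j} + card ((\<lambda>i. (i, i)) ` J)"
    by (rule card_Un_disjoint) auto
  also have "\<dots> = (card J choose 2) + card J"
    using card_strict_pairs[OF finite inj_on_subset[OF \<open>inj f\<close> subset_UNIV]]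
    by (simp add: card_image inj_on_def)
  also have "\<dots> = tau (card J)"
    by (simp add: tau_def numeral_2_eq_2)
  finally show ?thesis .
qed

lemma dim_skew_mats_le: "dim (skew_mats :: (real^'n^'n) set) \<le> CARD('n) choose 2"
proof -
  obtain f :: "'n \<Rightarrow> nat" where "inj f"
    using finite_imp_inj_to_nat_seg[OF finite_class.finite_UNIV] by blast
  let ?P = "{(i, j) \<in> UNIV \<times> UNIV. f i < f j}"
  have "dim (skew_mats :: (real^'n^'n) set) \<le> card ?P"
  proof (rule dim_le_card_if_entries_determine[OF subspace_skew_mats])
    fix K :: "real^'n^'n"
    assume K: "K \<in> skew_mats" and vanish: "\<And>i j. (i, j) \<in> ?P \<Longrightarrow> K$i$j = 0"
    have "K$i$j = 0" for i j
    proof -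
      have "transpose K = - K"
        using K by (simp add: skew_mats_def)
      from arg_cong[OF this, of "\<lambda>X. X$i$j"] have skew: "K$j$i = - K$i$j"
        by (simp add: transpose_def)
      consider "f i < f j" | "f j < f i" | "i = j"
        using injD[OF \<open>inj f\<close>, of i j] by (cases "f i" "f j" rule: linorder_cases) auto
      then show ?thesis
      proof cases
        case 1
        then show ?thesis using vanish[of i j] by simp
      next
        case 2
        then show ?thesis using vanish[of j i] skew by simp
      next
        case 3
        then show ?thesis using skew unfolding 3 by linarith
      qed
    qed
    then show "K = 0" by (simp add: vec_eq_iff)
  qed
  also have "card ?P = CARD('n) choose 2"
    using card_strict_pairs[of UNIV f] \<open>inj f\<close> by simp
  finally show ?thesis .
qed

section \<open>Symmetric matrices annihilating a full-rank matrix\<close>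

lemma exists_coordinate_complement:
  fixes V :: "(real^'n) set"
  assumes "subspace V"
  obtains J where "card J + dim V = CARD('n)"
    and "\<And>x. \<exists>w. (\<forall>i. i \<notin> J \<longrightarrow> w$i = 0) \<and> x - w \<in> V"
proof -
  obtain BV where BV: "BV \<subseteq> V" "independent BV" "V \<subseteq> span BV" "card BV = dim V"
    by (rule basis_exists)
  define axes where "axes = (\<lambda>j::'n. axis j (1::real))"
  obtain B where B: "BV \<subseteq> B" "B \<subseteq> BV \<union> range axes" "independent B" "BV \<union> range axes \<subseteq> span B"
    using maximal_independent_subset_extend[of BV "BV \<union> range axes"] BV(2) by blast
  have "span B = UNIV"
  proof -
    have "range axes = Basis"
      by (auto simp: axes_def Basis_vec_def)
    then show ?thesis
      using B(4) span_Basis span_minimal[of "range axes" "span B"] by auto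
  qed
  then have card_B: "card B = CARD('n)"
    using basis_card_eq_dim[of B UNIV] B(3) by simp
  define J where "J = {j. axes j \<in> B - BV}"
  have B_diff: "B - BV = axes ` J"
    using B(2) unfolding J_def by auto
  have "card (B - BV) = card J"
    unfolding B_diff by (rule card_image) (simp add: inj_on_def axes_def axis_eq_axis)
  moreover have "card (B - BV) = card B - card BV" "card BV \<le> card B"
    using finiteI_independent[OF B(3)] B(1) by (auto simp: card_Diff_subset finite_subset card_mono)
  ultimately have "card J + dim V = CARD('n)"
    using card_B BV(4) by simp
  moreover have "\<exists>w. (\<forall>i. i \<notin> J \<longrightarrow> w$i = 0) \<and> x - w \<in> V" for x
  proof -
    have "x \<in> span (BV \<union> axes ` J)"
      using \<open>span B = UNIV\<close> span_mono[of B "BV \<union> axes ` J"] B_diff by auto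
    then obtain v w where "x = v + w" "v \<in> span BV" "w \<in> span (axes ` J)"
      unfolding span_Un by blast
    moreover have "span (axes ` J) \<subseteq> {w. \<forall>i. i \<notin> J \<longrightarrow> w$i = 0}"
      by (rule span_minimal) (auto simp: axes_def subspace_def axis_def)
    moreover have "span BV \<subseteq> V"
      using BV(1) \<open>subspace V\<close> by (rule span_minimal)
    ultimately show ?thesis
      by (intro exI[of _ w]) auto
  qed
  ultimately show ?thesis
    using that by blast
qed

definition coord_proj :: "'n set \<Rightarrow> real^'n^'n" where
  "coord_proj J = (\<chi> i j. if i = j then of_bool (j \<in> J) else 0)"

lemma coord_proj_mult_vec: "coord_proj J *v x = (\<chi> i. if i \<in> J then x$i else 0)"
  by (simp add: coord_proj_def matrix_vector_mult_def vec_eq_iff if_distrib if_distribR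
      cong del: if_weak_cong)

lemma coord_proj_mult_left: "(coord_proj J ** M)$i$j = (if i \<in> J then M$i$j else 0)"
  by (simp add: coord_proj_def matrix_matrix_mult_def if_distrib if_distribR
      cong del: if_weak_cong)

lemma coord_proj_mult_right: "(M ** coord_proj J)$i$j = (if j \<in> J then M$i$j else 0)"
  by (simp add: coord_proj_def matrix_matrix_mult_def if_distrib if_distribR
      cong del: if_weak_cong)

lemma transpose_coord_proj: "transpose (coord_proj J) = coord_proj J"
  by (auto simp: coord_proj_def transpose_def vec_eq_iff)

lemma coord_proj_conj_in_sym_block:
  assumes "sym_mat S"
  shows "coord_proj J ** S ** coord_proj J \<in> sym_block J"
proof -
  have "sym_mat (coord_proj J ** S ** coord_proj J)"
    using assms by (simp add: sym_mat_def matrix_transpose_mul transpose_coord_proj matrix_mul_assoc)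
  then show ?thesis
    by (simp add: sym_block_def supported_on_def coord_proj_mult_left coord_proj_mult_right)
qed

lemma sym_mat_eq_congruence_coord_block:
  fixes S G :: "real^'n^'n"
  assumes "sym_mat S" and G: "G \<in> supported_on (J \<times> - J)"
    and kills: "\<And>k. k \<notin> J \<Longrightarrow> S *v (axis k 1 + column k G) = 0"
  shows "S = transpose (mat 1 - G) ** (coord_proj J ** S ** coord_proj J) ** (mat 1 - G)"
proof -
  let ?P = "coord_proj J"
  have "S *v axis k 1 = (S ** ?P ** (mat 1 - G)) *v axis k 1" for k
  proof -
    have "(S ** ?P ** (mat 1 - G)) *v axis k 1 = S *v (?P *v (axis k 1 - G *v axis k 1))"
      by (simp add: matrix_vector_mult_diff_rdistrib flip: matrix_vector_mul_assoc)
    then have expand: "(S ** ?P ** (mat 1 - G)) *v axis k 1 = S *v (?P *v (axis k 1 - column k G))"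
      by (simp add: matrix_vector_mult_basis)
    show ?thesis
    proof (cases "k \<in> J")
      case True
      then have "column k G = 0" and "?P *v axis k 1 = axis k 1"
        using G by (auto simp: column_def supported_on_def vec_eq_iff coord_proj_mult_vec axis_def)
      then show ?thesis
        unfolding expand by simp
    next
      case False
      then have "?P *v axis k 1 = 0" and "?P *v column k G = column k G"
        using G by (auto simp: column_def supported_on_def vec_eq_iff coord_proj_mult_vec axis_def)
      moreover have "S *v axis k 1 = - (S *v column k G)"
        using kills[OF False] by (simp add: matrix_vector_right_distrib eq_neg_iff_add_eq_0)
      ultimately show ?thesis
        unfolding expand
        by (simp add: matrix_vector_mult_diff_distrib linear_neg[OF matrix_vector_mul_linear])
    qed
  qed
  then have right: "S = S ** ?P ** (mat 1 - G)"
    by (simp add: matrix_eq_iff_basis)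
  then have "transpose S = transpose (S ** ?P ** (mat 1 - G))"
    by simp
  then have left: "S = transpose (mat 1 - G) ** ?P ** S"
    using \<open>sym_mat S\<close> by (simp add: sym_mat_def matrix_transpose_mul transpose_coord_proj matrix_mul_assoc)
  show ?thesis
    using left right by (metis matrix_mul_assoc)
qed

lemma sym_mat_annihilating_full_rank_chart:
  fixes S :: "real^'n^'n" and Y :: "real^'p^'n"
  assumes "sym_mat S" and "S ** Y = 0" and inj: "\<And>e. Y *v e = 0 \<Longrightarrow> e = 0"
  obtains J G where "card J + CARD('p) = CARD('n)" and "G \<in> supported_on (J \<times> - J)"
    and "S = transpose (mat 1 - G) ** (coord_proj J ** S ** coord_proj J) ** (mat 1 - G)"
proof -
  define V where "V = range (\<lambda>e. Y *v e)"
  have "subspace V"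
    unfolding V_def by (rule linear_subspace_image[OF matrix_vector_mul_linear subspace_UNIV])
  have "inj_on (\<lambda>e. Y *v e) (span UNIV)"
  proof (rule inj_onI)
    fix x y assume "Y *v x = Y *v y"
    then have "Y *v (x - y) = 0"
      by (simp add: matrix_vector_mult_diff_distrib)
    then show "x = y"
      using inj[of "x - y"] by simp
  qed
  then have "dim V = CARD('p)"
    unfolding V_def using dim_image_eq[OF matrix_vector_mul_linear, of Y UNIV] by simp
  have kills: "S *v v = 0" if "v \<in> V" for v
    using that \<open>S ** Y = 0\<close> by (auto simp: V_def matrix_vector_mul_assoc)
  obtain J where card_J: "card J + dim V = CARD('n)"
    and complement: "\<And>x. \<exists>w. (\<forall>i. i \<notin> J \<longrightarrow> w$i = 0) \<and> x - w \<in> V"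
    using exists_coordinate_complement[OF \<open>subspace V\<close>] by blast
  have "\<forall>k. \<exists>w. (\<forall>i. i \<notin> J \<longrightarrow> w$i = 0) \<and> axis k 1 - w \<in> V"
    using complement by blast
  then obtain w where w: "\<forall>k. (\<forall>i. i \<notin> J \<longrightarrow> w k $ i = 0) \<and> axis k 1 - w k \<in> V"
    by (rule choice[THEN exE])
  define G :: "real^'n^'n" where "G = (\<chi> i k. if k \<in> J then 0 else - w k $ i)"
  have G: "G \<in> supported_on (J \<times> - J)"
    using w by (auto simp: G_def supported_on_def)
  have "S *v (axis k 1 + column k G) = 0" if "k \<notin> J" for k
  proof -
    have "axis k 1 + column k G = axis k 1 - w k"
      using that by (simp add: G_def column_def vec_eq_iff)
    then show ?thesis
      using kills w by simp
  qed
  with \<open>sym_mat S\<close> G have "S = transpose (mat 1 - G) ** (coord_proj J ** S ** coord_proj J) ** (mat 1 - G)"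
    by (rule sym_mat_eq_congruence_coord_block)
  moreover have "card J + CARD('p) = CARD('n)"
    using card_J \<open>dim V = CARD('p)\<close> by simp
  ultimately show ?thesis
    using that G by blast
qed

section \<open>Costs with a full-rank critical point form a null set\<close>

lemma negligible_differentiable_image_subspace:
  fixes f :: "'a::euclidean_space \<Rightarrow> 'b::euclidean_space"
  assumes "subspace P" and "dim P < DIM('b)" and "f differentiable_on P"
  shows "negligible (f ` P)"
proof -
  obtain D :: "'b set" where "subspace D" and "dim D = dim P"
    using choose_subspace_of_subspace[of "dim P" "UNIV :: 'b set"] assms(2) by auto
  then obtain \<phi> where "linear \<phi>" and "\<phi> ` D = P"
    using subspace_isomorphism[OF _ \<open>subspace P\<close>] by blast
  have "negligible D"
    using \<open>dim D = dim P\<close> assms(2) by (intro negligible_lowdim) simp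
  moreover have "(f \<circ> \<phi>) differentiable_on D"
    unfolding differentiable_on_def
  proof
    fix x assume "x \<in> D"
    then show "(f \<circ> \<phi>) differentiable at x within D"
      using assms(3) \<open>\<phi> ` D = P\<close>
      by (intro differentiable_chain_within linear_imp_differentiable[OF \<open>linear \<phi>\<close>])
        (auto simp: differentiable_on_def)
  qed
  ultimately have "negligible ((f \<circ> \<phi>) ` D)"
    by (rule negligible_differentiable_image_negligible[OF order_refl])
  then show ?thesis
    by (simp only: image_comp[symmetric] \<open>\<phi> ` D = P\<close>)
qed

(* Every cost M with a full-rank 1-critical point is chart_map (G, T, W, K): G and T come from the
   factorisation of its multiplier matrix S, W = A^*(lam) and K = M - sym_part M. *)
definition chart_map :: "(real^'n^'n) \<times> (real^'n^'n) \<times> (real^'n^'n) \<times> (real^'n^'n) \<Rightarrow> real^'n^'n"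
  where "chart_map = (\<lambda>(G, T, W, K). transpose (mat 1 - G) ** T ** (mat 1 - G) + W + K)"

lemma differentiable_chart_map: "chart_map differentiable (at x within S)"
proof -
  have lin: "linear (\<lambda>x. fst x)" "linear (\<lambda>x. fst (snd x))" "linear (\<lambda>x. fst (snd (snd x)))"
    "linear (\<lambda>x. snd (snd (snd x)))" "linear (\<lambda>x::(real^'n^'n) \<times> _. transpose (fst x))"
    using linear_fst linear_compose[OF linear_snd linear_fst]
      linear_compose[OF linear_compose[OF linear_snd linear_snd] linear_fst]
      linear_compose[OF linear_compose[OF linear_snd linear_snd] linear_snd]
      linear_compose[OF linear_fst linear_transpose]
    by (simp_all add: o_def)
  have eq: "chart_map = (\<lambda>x. (mat 1 - transpose (fst x)) ** fst (snd x) ** (mat 1 - fst x)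
      + fst (snd (snd x)) + snd (snd (snd x)))"
    by (auto simp: chart_map_def transpose_diff)
  show ?thesis
    unfolding eq by (intro differentiable_add differentiable_matrix_mult differentiable_diff
        differentiable_const linear_imp_differentiable lin)
qed

lemma tau_Suc: "tau (Suc k) = tau k + Suc k"
  by (simp add: tau_def numeral_2_eq_2)

lemma tau_add: "tau (r + p) = tau r + tau p + r * p"
  by (induction p) (simp_all add: tau_Suc tau_def[of 0])

lemma square_eq_choose_two_add_tau: "n * n = (n choose 2) + tau n"
proof -
  have "tau n = (n choose 2) + n"
    by (simp add: tau_def numeral_2_eq_2)
  moreover have "2 * (n choose 2) + n = n * n"
    by (cases n) (simp_all add: choose_two algebra_simps)
  ultimately show ?thesis by simp
qed

definition chart_domain :: "'n set \<Rightarrow> (real^'n^'n) set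
    \<Rightarrow> ((real^'n^'n) \<times> (real^'n^'n) \<times> (real^'n^'n) \<times> (real^'n^'n)) set" where
  "chart_domain J W = supported_on (J \<times> - J) \<times> sym_block J \<times> W \<times> skew_mats"

lemma negligible_chart_image:
  fixes W :: "(real^'n^'n) set" and J :: "'n set"
  assumes "subspace W" and "card J + p = CARD('n)" and "dim W < tau p"
  shows "negligible (chart_map ` chart_domain J W)"
proof (rule negligible_differentiable_image_subspace)
  have subspaces: "subspace (W \<times> skew_mats)" "subspace (sym_block J \<times> W \<times> skew_mats)"
    using subspace_Times[OF subspace_sym_block subspace_Times[OF assms(1) subspace_skew_mats]]
      subspace_Times[OF assms(1) subspace_skew_mats] by blast+
  show "subspace (chart_domain J W)"
    unfolding chart_domain_def by (rule subspace_Times[OF subspace_supported_on subspaces(2)])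
  have "card (- J) = p"
    using assms(2) by (simp add: Compl_eq_Diff_UNIV card_Diff_subset)
  then have "dim (supported_on (J \<times> - J)) \<le> card J * p"
    using dim_supported_on_le[of "J \<times> - J"] by (simp add: card_cartesian_product)
  then have "dim (chart_domain J W) \<le> card J * p + tau (card J) + dim W + (CARD('n) choose 2)"
    using dim_sym_block_le[of J] dim_skew_mats_le[where 'n='n]
    by (simp add: chart_domain_def dim_Times[OF subspace_supported_on subspaces(2)]
        dim_Times[OF subspace_sym_block subspaces(1)] dim_Times[OF assms(1) subspace_skew_mats])
  also have "\<dots> < tau (card J + p) + (CARD('n) choose 2)"
    using assms(3) by (simp add: tau_add)
  also have "\<dots> = DIM(real^'n^'n)"
    using assms(2) by (simp add: square_eq_choose_two_add_tau)
  finally show "dim (chart_domain J W) < DIM(real^'n^'n)" .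
  show "chart_map differentiable_on chart_domain J W"
    by (simp add: differentiable_on_def differentiable_chart_map)
qed

lemma multiplier_combination_in_span_active:
  assumes "crit1_mult C A b m1 m2 Y lam"
  shows "(\<Sum>i<m1 + m2. lam i *\<^sub>R A i) \<in> span (A ` active A b m1 m2 (gram Y))"
proof (rule span_sum)
  fix i assume "i \<in> {..<m1 + m2}"
  then show "lam i *\<^sub>R A i \<in> span (A ` active A b m1 m2 (gram Y))"
    using assms by (cases "i \<in> active A b m1 m2 (gram Y)")
      (auto simp: crit1_mult_def span_zero intro: span_mul span_base)
qed

lemma dim_active_le_mprime:
  fixes A :: "nat \<Rightarrow> real^'n^'n"
  assumes "feasible A b m1 m2 X"
  shows "dim (A ` active A b m1 m2 X) \<le> mprime A b m1 m2"
proof -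
  have "dim (A ` active A b m1 m2 X') \<le> DIM(real^'n^'n)" for X'
    using dim_subset_UNIV[of "A ` active A b m1 m2 X'"] by simp
  then have "{dim (A ` active A b m1 m2 X) | X. feasible A b m1 m2 X} \<subseteq> {..DIM(real^'n^'n)}"
    by auto
  then have "finite {dim (A ` active A b m1 m2 X) | X. feasible A b m1 m2 X}"
    by (rule finite_subset) simp
  then show ?thesis
    unfolding mprime_def using assms by (intro Max_ge) auto
qed

lemma full_rank_critical_in_chart_image:
  fixes M :: "real^'n^'n" and Y :: "real^'p^'n"
  assumes "\<forall>i<m1 + m2. sym_mat (A i)" and cert: "crit1_mult (sym_part M) A b m1 m2 Y lam"
    and "\<And>e. Y *v e = 0 \<Longrightarrow> e = 0"
  obtains J where "card J + CARD('p) = CARD('n)"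
    and "M \<in> chart_map ` chart_domain J (span (A ` active A b m1 m2 (gram Y)))"
proof -
  let ?S = "Smat (sym_part M) A (m1 + m2) lam"
  let ?w = "\<Sum>i<m1 + m2. lam i *\<^sub>R A i"
  have "sym_mat ?S"
    using assms(1) sym_mat_sym_part by (rule sym_mat_Smat)
  moreover have "?S ** Y = 0"
    using cert by (simp add: crit1_mult_def)
  ultimately obtain J G where J: "card J + CARD('p) = CARD('n)"
    and G: "G \<in> supported_on (J \<times> - J)"
    and S_eq: "?S = transpose (mat 1 - G) ** (coord_proj J ** ?S ** coord_proj J) ** (mat 1 - G)"
    using assms(3) by (rule sym_mat_annihilating_full_rank_chart)
  have "M = chart_map (G, coord_proj J ** ?S ** coord_proj J, ?w, M - sym_part M)"
    by (simp add: chart_map_def flip: S_eq) (simp add: Smat_def)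
  moreover have "(G, coord_proj J ** ?S ** coord_proj J, ?w, M - sym_part M)
      \<in> chart_domain J (span (A ` active A b m1 m2 (gram Y)))"
    using G coord_proj_conj_in_sym_block[OF \<open>sym_mat ?S\<close>]
      multiplier_combination_in_span_active[OF cert] diff_sym_part_in_skew_mats
    by (simp add: chart_domain_def)
  ultimately show ?thesis
    using that J by blast
qed

lemma negligible_full_rank_critical_costs:
  fixes A :: "nat \<Rightarrow> real^'n^'n"
  assumes "\<forall>i<m1 + m2. sym_mat (A i)" and "mprime A b m1 m2 < tau CARD('p)"
  shows "negligible {M. \<exists>Y::real^'p^'n. (\<forall>e. Y *v e = 0 \<longrightarrow> e = 0)
    \<and> feasible A b m1 m2 (gram Y) \<and> (\<exists>lam. crit1_mult (sym_part M) A b m1 m2 Y lam)}"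
proof (rule negligible_subset)
  let ?charts = "{(J, I). card J + CARD('p) = CARD('n) \<and> I \<subseteq> {..<m1 + m2}
    \<and> dim (A ` I) \<le> mprime A b m1 m2}"
  show "negligible (\<Union>(J, I)\<in>?charts. chart_map ` chart_domain J (span (A ` I)))"
  proof (rule negligible_Union)
    show "finite ((\<lambda>(J, I). chart_map ` chart_domain J (span (A ` I))) ` ?charts)"
      by (rule finite_imageI, rule finite_subset[of _ "UNIV \<times> Pow {..<m1 + m2}"]) auto
    show "negligible T" if T: "T \<in> (\<lambda>(J, I). chart_map ` chart_domain J (span (A ` I))) ` ?charts"
      for T
    proof -
      obtain J I where "T = chart_map ` chart_domain J (span (A ` I))"
        and "card J + CARD('p) = CARD('n)" and "dim (A ` I) \<le> mprime A b m1 m2"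
        using T by fastforce
      then show ?thesis
        using negligible_chart_image[OF subspace_span, of J "CARD('p)" "A ` I"] assms(2) by simp
    qed
  qed
  show "{M. \<exists>Y::real^'p^'n. (\<forall>e. Y *v e = 0 \<longrightarrow> e = 0)
    \<and> feasible A b m1 m2 (gram Y) \<and> (\<exists>lam. crit1_mult (sym_part M) A b m1 m2 Y lam)}
    \<subseteq> (\<Union>(J, I)\<in>?charts. chart_map ` chart_domain J (span (A ` I)))"
  proof clarify
    fix M :: "real^'n^'n" and Y :: "real^'p^'n" and lam
    assume inj: "\<forall>e. Y *v e = 0 \<longrightarrow> e = 0" and "feasible A b m1 m2 (gram Y)"
      and cert: "crit1_mult (sym_part M) A b m1 m2 Y lam"
    let ?I = "active A b m1 m2 (gram Y)"
    obtain J where "card J + CARD('p) = CARD('n)" and M: "M \<in> chart_map ` chart_domain J (span (A ` ?I))"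
      using assms(1) cert inj by (blast intro: full_rank_critical_in_chart_image)
    moreover have "?I \<subseteq> {..<m1 + m2}"
      by (auto simp: active_def)
    moreover have "dim (A ` ?I) \<le> mprime A b m1 m2"
      using \<open>feasible A b m1 m2 (gram Y)\<close> by (rule dim_active_le_mprime)
    ultimately have "(J, ?I) \<in> ?charts"
      by simp
    with M show "M \<in> (\<Union>(J, I)\<in>?charts. chart_map ` chart_domain J (span (A ` I)))"
      by blast
  qed
qed

theorem theorem1:
  fixes A :: "nat \<Rightarrow> real^'n^'n" and b :: "nat \<Rightarrow> real" and m1 m2 :: nat
  assumes "\<forall>i<m1 + m2. sym_mat (A i)"
    and "\<exists>X. feasible A b m1 m2 X"
    and "tau CARD('p) > mprime A b m1 m2"
  shows "\<exists>N. {M::real^'n^'n. sym_part M \<in> N} \<in> null_sets lebesgue \<and>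
    (\<forall>C. sym_mat C \<and> C \<notin> N \<and> sdp_attains C A b m1 m2 \<longrightarrow>
       (\<forall>Y::real^'p^'n. two_critical C A b m1 m2 Y \<longrightarrow>
          bm_global_min C A b m1 m2 Y \<and> sdp_opt C A b m1 m2 (gram Y)))"
proof -
  define N where "N = {C. \<exists>Y::real^'p^'n. (\<forall>e. Y *v e = 0 \<longrightarrow> e = 0)
    \<and> feasible A b m1 m2 (gram Y) \<and> (\<exists>lam. crit1_mult C A b m1 m2 Y lam)}"
  have "{M::real^'n^'n. sym_part M \<in> N} \<in> null_sets lebesgue"
    using negligible_full_rank_critical_costs[OF assms(1,3)]
    by (simp add: N_def negligible_iff_null_sets)
  moreover have "bm_global_min C A b m1 m2 Y \<and> sdp_opt C A b m1 m2 (gram Y)"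
    if "sym_mat C" "C \<notin> N" and crit: "two_critical C A b m1 m2 Y" for C and Y :: "real^'p^'n"
  proof -
    obtain e where "Y *v e = 0" "e \<noteq> 0"
      using \<open>C \<notin> N\<close> crit unfolding N_def two_critical_def by blast
    then show ?thesis
      using two_critical_rank_deficient_optimal assms(1) \<open>sym_mat C\<close> crit by blast
  qed
  ultimately show ?thesis
    by blast
qed

end
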